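(* Let $K$ be an infinite field and let $\mathcal{A} \subseteq (\mathbb{Z}_{\ge 0})^n$ be a support set all of whose elements are monomials of the same type. Let $G \subseteq S_n$ be a subgroup acting transitively on the set of all monomials of this type. Then for general coefficients of $f \in K^{\mathcal{A}}$ with respect to $\mathcal{A}$, the ideal $(G.f) \subseteq K[x_1,\dots,x_n]$ is a monomial ideal, and it is generated by the orbit $G.m$ of any monomial $m$ occurring in $f$ (equivalently, it is generated by all monomials of this type).
   Context: A support set is a non-empty finite subset $\mathcal{A}\subseteq(\mathbb{Z}_{\ge0})^n$; monomials are identified with exponent vectors. The type of a monomial is the partition of its degree obtained by listing its exponents in decreasing order; two monomials have the same type iff they are permutations of each other. $K^{\mathcal{A}}$ is identified with the polynomials whose support is contained in $\mathcal{A}$. $S_n$ acts by $\sigma.x_i = x_{\sigma(i)}$; $G.f$ is the orbit of $f$ and $(G.f)$ the ideal generated by it. "For general coefficients of $f$ with respect to $\mathcal{A}$" means: the set of $f\in K^{\mathcal{A}}$ for which the assertion holds contains a non-empty Zariski-open subset of $K^{\mathcal{A}}$. *)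

theory Defs
  imports "HOL-Library.Poly_Mapping" "HOL-Combinatorics.Permutations"
begin

text \<open>Polynomials in K[x_0,...,x_{n-1}] are represented as
 polynomial maps from exponent vectors to coefficients (exponent vectors to coefficients); exponent vectors
 with Poly_Mapping.keys in {..<n} are the monomials in n variables.\<close>

type_synonym 'k mpoly = "(nat \<Rightarrow>\<^sub>0 nat) \<Rightarrow>\<^sub>0 'k"

definition exps :: "nat \<Rightarrow> (nat \<Rightarrow>\<^sub>0 nat) set" where
  "exps n = {\<alpha>. Poly_Mapping.keys \<alpha> \<subseteq> {..<n}}"

definition mtype :: "nat \<Rightarrow> (nat \<Rightarrow>\<^sub>0 nat) \<Rightarrow> (nat \<Rightarrow>\<^sub>0 nat) set" where
  "mtype n \<alpha> = {\<beta>. Poly_Mapping.keys \<beta> \<subseteq> {..<n} \<and>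
      (\<exists>\<pi>. \<pi> permutes {..<n} \<and> Poly_Mapping.lookup \<beta> = Poly_Mapping.lookup \<alpha> \<circ> \<pi>)}"

text \<open>Action sigma.x_i = x_(sigma i) on exponent vectors: the exponent of x_j in
 sigma.x^alpha is alpha(sigma^-1 j).\<close>
definition mon_act :: "(nat \<Rightarrow> nat) \<Rightarrow> (nat \<Rightarrow>\<^sub>0 nat) \<Rightarrow> (nat \<Rightarrow>\<^sub>0 nat)" where
  "mon_act \<sigma> \<alpha> = Abs_poly_mapping (\<lambda>j. Poly_Mapping.lookup \<alpha> (inv \<sigma> j))"

definition poly_act :: "(nat \<Rightarrow> nat) \<Rightarrow> 'k::comm_ring_1 mpoly \<Rightarrow> 'k mpoly" where
  "poly_act \<sigma> f = (\<Sum>\<alpha>\<in>Poly_Mapping.keys f. Poly_Mapping.single (mon_act \<sigma> \<alpha>) (Poly_Mapping.lookup f \<alpha>))"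

definition xmono :: "(nat \<Rightarrow>\<^sub>0 nat) \<Rightarrow> 'k::comm_ring_1 mpoly" where
  "xmono \<alpha> = Poly_Mapping.single \<alpha> 1"

definition ideal_gen :: "'a::comm_ring_1 set \<Rightarrow> 'a set" where
  "ideal_gen S = {p. \<exists>F c. finite F \<and> F \<subseteq> S \<and> p = (\<Sum>s\<in>F. c s * s)}"

definition is_monomial_ideal :: "'k::comm_ring_1 mpoly set \<Rightarrow> bool" where
  "is_monomial_ideal I \<longleftrightarrow> (\<exists>M. I = ideal_gen (xmono ` M))"

definition perm_subgroup :: "nat \<Rightarrow> (nat \<Rightarrow> nat) set \<Rightarrow> bool" where
  "perm_subgroup n G \<longleftrightarrow> (\<forall>\<sigma>\<in>G. \<sigma> permutes {..<n}) \<and> id \<in> G \<and>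
     (\<forall>\<sigma>\<in>G. \<forall>\<tau>\<in>G. \<sigma> \<circ> \<tau> \<in> G) \<and> (\<forall>\<sigma>\<in>G. inv \<sigma> \<in> G)"

text \<open>Evaluation of a polynomial P in variables indexed by exponent vectors
 at a point c (a coefficient vector).\<close>
definition peval :: "(((nat \<Rightarrow>\<^sub>0 nat) \<Rightarrow>\<^sub>0 nat) \<Rightarrow>\<^sub>0 'k::comm_ring_1) \<Rightarrow> ((nat \<Rightarrow>\<^sub>0 nat) \<Rightarrow> 'k) \<Rightarrow> 'k" where
  "peval P c = (\<Sum>m\<in>Poly_Mapping.keys P. Poly_Mapping.lookup P m * (\<Prod>v\<in>Poly_Mapping.keys m. c v ^ Poly_Mapping.lookup m v))"

end

theory Submission
  imports Defs Jordan_Normal_Form.Determinant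
begin

text \<open>Let \<open>T\<close> be the set of monomials of the given type, a single \<open>G\<close>-orbit containing the
  support of \<open>f\<close>. Choose \<open>\<sigma>\<^sub>i \<in> G\<close> carrying a fixed \<open>\<alpha>\<^sub>0 \<in> T\<close> to the \<open>i\<close>-th element of \<open>T\<close>.
  The determinant of the square matrix of coefficients of the \<open>\<sigma>\<^sub>i.f\<close> on \<open>T\<close> is a polynomial
  \<open>P\<close> in the coefficients of \<open>f\<close>, and \<open>P(x\<^sup>\<alpha>\<^sup>\<^sub>0) = 1\<close>. Wherever \<open>P\<close> does not vanish, inverting
  the matrix writes every monomial of \<open>T\<close> as a linear combination of the \<open>\<sigma>\<^sub>i.f\<close>, so the orbit
  of \<open>f\<close> and the monomials of \<open>T\<close> generate the same ideal.\<close>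

unbundle no m_inv_syntax \<comment> \<open>HOL-Algebra, loaded by Jordan_Normal_Form, would capture \<open>inv\<close>\<close>

interpretation ring_module: Modules.module "(*) :: 'a::comm_ring_1 \<Rightarrow> 'a \<Rightarrow> 'a"
  by standard (simp_all add: algebra_simps)

lemma ideal_gen_eq_span: "ideal_gen S = ring_module.span S"
  unfolding ideal_gen_def ring_module.span_explicit by blast

definition mon_eval :: "((nat \<Rightarrow>\<^sub>0 nat) \<Rightarrow>\<^sub>0 nat) \<Rightarrow> ((nat \<Rightarrow>\<^sub>0 nat) \<Rightarrow> 'k::comm_ring_1) \<Rightarrow> 'k" where
  "mon_eval m c = (\<Prod>v\<in>Poly_Mapping.keys m. c v ^ Poly_Mapping.lookup m v)"

lemma mon_eval_superset:
  "finite S \<Longrightarrow> Poly_Mapping.keys m \<subseteq> S \<Longrightarrow> mon_eval m c = (\<Prod>v\<in>S. c v ^ Poly_Mapping.lookup m v)"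
  unfolding mon_eval_def by (rule prod.mono_neutral_left) (auto simp: in_keys_iff)

lemma mon_eval_add: "mon_eval (a + b) c = mon_eval a c * mon_eval b c"
proof -
  let ?S = "Poly_Mapping.keys a \<union> Poly_Mapping.keys b"
  have "mon_eval (a + b) c = (\<Prod>v\<in>?S. c v ^ Poly_Mapping.lookup (a + b) v)"
    by (rule mon_eval_superset) (auto simp: Poly_Mapping.keys_add)
  also have "\<dots> = (\<Prod>v\<in>?S. c v ^ Poly_Mapping.lookup a v) * (\<Prod>v\<in>?S. c v ^ Poly_Mapping.lookup b v)"
    by (simp add: lookup_add power_add prod.distrib)
  also have "\<dots> = mon_eval a c * mon_eval b c"
    by (subst (1 2) mon_eval_superset[of ?S]) auto
  finally show ?thesis .
qed

lemma mon_eval_sum_single: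
  "finite I \<Longrightarrow> mon_eval (\<Sum>i\<in>I. Poly_Mapping.single (b i) 1) c = (\<Prod>i\<in>I. c (b i))"
  by (induction I rule: finite_induct) (simp_all add: mon_eval_add, simp_all add: mon_eval_def)

lemma peval_add: "peval (P + Q) c = peval P c + peval Q c"
proof -
  let ?S = "Poly_Mapping.keys P \<union> Poly_Mapping.keys Q"
  have eq: "peval R c = (\<Sum>m\<in>?S. Poly_Mapping.lookup R m * mon_eval m c)" if "Poly_Mapping.keys R \<subseteq> ?S" for R
    unfolding peval_def mon_eval_def[symmetric] using that
    by (intro sum.mono_neutral_left) (auto simp: in_keys_iff)
  show ?thesis
    by (subst (1 2 3) eq) (auto simp: Poly_Mapping.keys_add lookup_add distrib_right sum.distrib)
qed

lemma peval_sum: "peval (\<Sum>i\<in>I. Q i) c = (\<Sum>i\<in>I. peval (Q i) c)"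
  by (induction I rule: infinite_finite_induct) (simp_all add: peval_add, simp_all add: peval_def)

lemma peval_single: "peval (Poly_Mapping.single m a) c = a * mon_eval m c"
  unfolding peval_def mon_eval_def by (cases "a = 0") auto

lemma ex_peval_eq_det:
  fixes x :: "nat \<Rightarrow> nat \<Rightarrow> nat \<Rightarrow>\<^sub>0 nat"
  shows "\<exists>P :: ((nat \<Rightarrow>\<^sub>0 nat) \<Rightarrow>\<^sub>0 nat) \<Rightarrow>\<^sub>0 'k::comm_ring_1.
           \<forall>c. peval P c = det (mat N N (\<lambda>(i, j). c (x i j)))"
proof (intro exI allI)
  fix c :: "(nat \<Rightarrow>\<^sub>0 nat) \<Rightarrow> 'k"
  let ?M = "mat N N (\<lambda>(i, j). c (x i j))"
  let ?P = "\<Sum>p\<in>{p. p permutes {0..<N}}.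
              Poly_Mapping.single (\<Sum>i\<in>{0..<N}. Poly_Mapping.single (x i (p i)) (1::nat)) (signof p :: 'k)"
  have "peval ?P c = (\<Sum>p\<in>{p. p permutes {0..<N}}. signof p * (\<Prod>i\<in>{0..<N}. c (x i (p i))))"
    by (simp add: peval_sum peval_single mon_eval_sum_single[simplified])
  also have "\<dots> = (\<Sum>p\<in>{p. p permutes {0..<N}}. signof p * (\<Prod>i\<in>{0..<N}. ?M $$ (i, p i)))"
    by (intro sum.cong prod.cong arg_cong2[where f = "(*)"]) (auto dest: permutes_in_image)
  also have "\<dots> = det ?M"
    by (rule det_def'[symmetric]) simp
  finally show "peval ?P c = det ?M" .
qed

lemma support_mon_act:
  assumes "\<sigma> permutes {..<n}"
  shows "{j. Poly_Mapping.lookup \<alpha> (inv \<sigma> j) \<noteq> 0} = \<sigma> ` Poly_Mapping.keys \<alpha>"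
proof -
  have "j \<in> \<sigma> ` Poly_Mapping.keys \<alpha> \<longleftrightarrow> inv \<sigma> j \<in> Poly_Mapping.keys \<alpha>" for j
    using permutes_inverses[OF assms] by (metis image_iff)
  then show ?thesis
    by (auto simp: in_keys_iff)
qed

lemma lookup_mon_act:
  assumes "\<sigma> permutes {..<n}"
  shows "Poly_Mapping.lookup (mon_act \<sigma> \<alpha>) = Poly_Mapping.lookup \<alpha> \<circ> inv \<sigma>"
proof -
  have "finite {j. Poly_Mapping.lookup \<alpha> (inv \<sigma> j) \<noteq> 0}"
    unfolding support_mon_act[OF assms] by simp
  then show ?thesis
    unfolding mon_act_def by (simp add: comp_def lookup_Abs_poly_mapping)
qed

lemma keys_mon_act:
  assumes "\<sigma> permutes {..<n}"
  shows "Poly_Mapping.keys (mon_act \<sigma> \<alpha>) = \<sigma> ` Poly_Mapping.keys \<alpha>"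
  unfolding support_mon_act[OF assms, symmetric] by (auto simp: in_keys_iff lookup_mon_act[OF assms])

lemma mon_act_inv_left: "\<sigma> permutes {..<n} \<Longrightarrow> mon_act (inv \<sigma>) (mon_act \<sigma> \<alpha>) = \<alpha>"
  by (rule poly_mapping_eqI)
     (simp add: lookup_mon_act permutes_inv lookup_mon_act[OF permutes_inv] permutes_inv_inv permutes_inverses)

lemma mon_act_inv_right: "\<sigma> permutes {..<n} \<Longrightarrow> mon_act \<sigma> (mon_act (inv \<sigma>) \<alpha>) = \<alpha>"
  by (rule poly_mapping_eqI)
     (simp add: lookup_mon_act permutes_inv lookup_mon_act[OF permutes_inv] permutes_inv_inv permutes_inverses)

lemma mon_act_inv_eq_iff:
  "\<sigma> permutes {..<n} \<Longrightarrow> mon_act (inv \<sigma>) \<gamma> = \<alpha> \<longleftrightarrow> \<gamma> = mon_act \<sigma> \<alpha>"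
  using mon_act_inv_left[of \<sigma> n] mon_act_inv_right[of \<sigma> n] by metis

lemma lookup_poly_act:
  assumes "\<sigma> permutes {..<n}"
  shows "Poly_Mapping.lookup (poly_act \<sigma> f) \<gamma> = Poly_Mapping.lookup f (mon_act (inv \<sigma>) \<gamma>)"
proof -
  have "mon_act \<sigma> \<alpha> = \<gamma> \<longleftrightarrow> \<alpha> = mon_act (inv \<sigma>) \<gamma>" for \<alpha>
    using mon_act_inv_eq_iff[OF assms, of \<gamma> \<alpha>] by auto
  then show ?thesis
    unfolding poly_act_def lookup_sum lookup_single by (simp add: when_def in_keys_iff)
qed

lemma keys_poly_act:
  assumes "\<sigma> permutes {..<n}"
  shows "Poly_Mapping.keys (poly_act \<sigma> f) \<subseteq> mon_act \<sigma> ` Poly_Mapping.keys f"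
proof
  fix \<gamma> assume "\<gamma> \<in> Poly_Mapping.keys (poly_act \<sigma> f)"
  then have "mon_act (inv \<sigma>) \<gamma> \<in> Poly_Mapping.keys f"
    by (simp add: in_keys_iff lookup_poly_act[OF assms])
  then show "\<gamma> \<in> mon_act \<sigma> ` Poly_Mapping.keys f"
    using mon_act_inv_right[OF assms] by (metis image_eqI)
qed

lemma mtype_trans: "\<beta> \<in> mtype n \<alpha> \<Longrightarrow> \<gamma> \<in> mtype n \<beta> \<Longrightarrow> \<gamma> \<in> mtype n \<alpha>"
  unfolding mtype_def by (auto intro: permutes_compose simp: comp_assoc)

lemma mon_act_mem_mtype:
  assumes \<sigma>: "\<sigma> permutes {..<n}" and \<beta>: "\<beta> \<in> mtype n \<alpha>"
  shows "mon_act \<sigma> \<beta> \<in> mtype n \<alpha>"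
proof -
  obtain \<pi> where \<pi>: "\<pi> permutes {..<n}" "Poly_Mapping.lookup \<beta> = Poly_Mapping.lookup \<alpha> \<circ> \<pi>"
    and keys: "Poly_Mapping.keys \<beta> \<subseteq> {..<n}"
    using \<beta> unfolding mtype_def by blast
  have "Poly_Mapping.keys (mon_act \<sigma> \<beta>) \<subseteq> {..<n}"
    using keys permutes_image[OF \<sigma>] by (auto simp: keys_mon_act[OF \<sigma>])
  moreover have "Poly_Mapping.lookup (mon_act \<sigma> \<beta>) = Poly_Mapping.lookup \<alpha> \<circ> (\<pi> \<circ> inv \<sigma>)"
    by (simp add: lookup_mon_act[OF \<sigma>] \<pi>(2) comp_assoc)
  moreover have "\<pi> \<circ> inv \<sigma> permutes {..<n}"
    using \<pi>(1) \<sigma> by (simp add: permutes_compose permutes_inv)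
  ultimately show ?thesis
    unfolding mtype_def by blast
qed

lemma finite_mtype: "finite (mtype n \<alpha>)"
proof (rule finite_subset)
  show "mtype n \<alpha> \<subseteq> (\<lambda>\<pi>. mon_act (inv \<pi>) \<alpha>) ` {\<pi>. \<pi> permutes {..<n}}"
  proof
    fix \<beta> assume "\<beta> \<in> mtype n \<alpha>"
    then obtain \<pi> where \<pi>: "\<pi> permutes {..<n}" "Poly_Mapping.lookup \<beta> = Poly_Mapping.lookup \<alpha> \<circ> \<pi>"
      unfolding mtype_def by blast
    then have "\<beta> = mon_act (inv \<pi>) \<alpha>"
      by (intro poly_mapping_eqI) (simp add: lookup_mon_act[OF permutes_inv] permutes_inv_inv)
    with \<pi>(1) show "\<beta> \<in> (\<lambda>\<pi>. mon_act (inv \<pi>) \<alpha>) ` {\<pi>. \<pi> permutes {..<n}}"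
      by blast
  qed
qed (simp add: finite_permutations)

lemma lookup_single_zero_mult:
  "Poly_Mapping.lookup (Poly_Mapping.single 0 a * p) \<gamma> = (a::'a::comm_ring_1) * Poly_Mapping.lookup p \<gamma>"
  by (simp add: mult_map_scale_conv_mult[symmetric] map.rep_eq when_def)

lemma xmono_mem_ideal_gen_if_det_nonzero:
  fixes fs :: "nat \<Rightarrow> 'k::field mpoly" and e :: "nat \<Rightarrow> nat \<Rightarrow>\<^sub>0 nat"
  assumes e: "bij_betw e {0..<N} T"
    and keys: "\<And>i. i < N \<Longrightarrow> Poly_Mapping.keys (fs i) \<subseteq> T"
    and det: "det (mat N N (\<lambda>(i, j). Poly_Mapping.lookup (fs i) (e j))) \<noteq> 0"
    and t: "t \<in> T"
  shows "xmono t \<in> ideal_gen (fs ` {0..<N})"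
proof -
  define M where "M = mat N N (\<lambda>(i, j). Poly_Mapping.lookup (fs i) (e j))"
  obtain k where k: "k < N" "e k = t"
    using e t by (metis atLeastLessThan_iff bij_betw_iff_bijections)
  define q where "q = (\<Sum>i\<in>{0..<N}. Poly_Mapping.single 0 (adj_mat M $$ (k, i) / det M) * fs i)"
  have adj_row: "(\<Sum>i\<in>{0..<N}. adj_mat M $$ (k, i) * M $$ (i, j)) = (if k = j then det M else 0)"
    if "j < N" for j
  proof -
    have M: "M \<in> carrier_mat N N"
      unfolding M_def by simp
    then have "(\<Sum>i\<in>{0..<N}. adj_mat M $$ (k, i) * M $$ (i, j)) = (adj_mat M * M) $$ (k, j)"
      using adj_mat(1)[OF M] k that by (simp add: scalar_prod_def)
    also have "\<dots> = (det M \<cdot>\<^sub>m 1\<^sub>m N) $$ (k, j)"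
      by (simp add: adj_mat(3)[OF M])
    finally show ?thesis
      using k that by simp
  qed
  have "Poly_Mapping.lookup (xmono t) \<gamma> = Poly_Mapping.lookup q \<gamma>" for \<gamma>
  proof (cases "\<gamma> \<in> T")
    case True
    then obtain j where j: "j < N" "e j = \<gamma>"
      using e by (metis atLeastLessThan_iff bij_betw_iff_bijections)
    have "Poly_Mapping.lookup q \<gamma> = (\<Sum>i\<in>{0..<N}. adj_mat M $$ (k, i) * M $$ (i, j)) / det M"
      unfolding q_def lookup_sum lookup_single_zero_mult sum_divide_distrib
      by (intro sum.cong) (simp_all add: M_def j)
    also have "\<dots> = (if t = \<gamma> then 1 else 0)"
    proof -
      have "t = \<gamma> \<longleftrightarrow> k = j"
        using inj_onD[OF bij_betw_imp_inj_on[OF e]] k j by auto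
      then show ?thesis
        using adj_row[OF j(1)] det unfolding M_def by simp
    qed
    finally show ?thesis
      by (simp add: xmono_def lookup_single when_def)
  next
    case False
    then have "Poly_Mapping.lookup (fs i) \<gamma> = 0" if "i < N" for i
      using keys[OF that] by (auto simp: in_keys_iff)
    with False t show ?thesis
      unfolding q_def lookup_sum lookup_single_zero_mult
      by (auto simp: xmono_def lookup_single when_def)
  qed
  then have "xmono t = q"
    by (rule poly_mapping_eqI)
  also have "q \<in> ideal_gen (fs ` {0..<N})"
    unfolding q_def ideal_gen_eq_span
    by (intro ring_module.span_sum ring_module.span_scale ring_module.span_base) simp
  finally show ?thesis .
qed

lemma poly_act_mem_ideal_gen_xmono:
  assumes "\<And>\<alpha>. \<alpha> \<in> Poly_Mapping.keys f \<Longrightarrow> mon_act \<sigma> \<alpha> \<in> T"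
  shows "poly_act \<sigma> f \<in> ideal_gen (xmono ` T)"
proof -
  have "poly_act \<sigma> f =
      (\<Sum>\<alpha>\<in>Poly_Mapping.keys f. Poly_Mapping.single 0 (Poly_Mapping.lookup f \<alpha>) * xmono (mon_act \<sigma> \<alpha>))"
    unfolding poly_act_def xmono_def by (simp add: mult_single)
  also have "\<dots> \<in> ideal_gen (xmono ` T)"
    unfolding ideal_gen_eq_span using assms
    by (intro ring_module.span_sum ring_module.span_scale ring_module.span_base) simp
  finally show ?thesis .
qed

lemma ideal_gen_xmono_orbit_eq:
  assumes closed: "\<And>\<sigma> \<beta>. \<sigma> \<in> G \<Longrightarrow> \<beta> \<in> T \<Longrightarrow> mon_act \<sigma> \<beta> \<in> T"
    and transitive: "\<forall>\<beta>\<in>T. \<forall>\<gamma>\<in>T. \<exists>\<sigma>\<in>G. mon_act \<sigma> \<beta> = \<gamma>"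
    and "\<alpha> \<in> T"
  shows "ideal_gen ((\<lambda>\<sigma>. xmono (mon_act \<sigma> \<alpha>)) ` G) = ideal_gen (xmono ` T)"
proof -
  have "(\<lambda>\<sigma>. mon_act \<sigma> \<alpha>) ` G = T"
    using assms by (auto simp: image_iff) (metis)
  then show ?thesis
    by (metis image_image)
qed

lemma orbit_ideal_eq_ideal_gen_xmono_if_det_nonzero:
  fixes f :: "'k::field mpoly"
  assumes perm: "\<And>\<sigma>. \<sigma> \<in> G \<Longrightarrow> \<sigma> permutes {..<n}"
    and closed: "\<And>\<sigma> \<beta>. \<sigma> \<in> G \<Longrightarrow> \<beta> \<in> T \<Longrightarrow> mon_act \<sigma> \<beta> \<in> T"
    and e: "bij_betw e {0..<N} T" and \<sigma>s: "\<And>i. i < N \<Longrightarrow> \<sigma>s i \<in> G"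
    and f: "Poly_Mapping.keys f \<subseteq> T"
    and det: "det (mat N N (\<lambda>(i, j). Poly_Mapping.lookup f (mon_act (inv (\<sigma>s i)) (e j)))) \<noteq> 0"
  shows "ideal_gen ((\<lambda>\<sigma>. poly_act \<sigma> f) ` G) = ideal_gen (xmono ` T)"
proof
  have "poly_act \<sigma> f \<in> ideal_gen (xmono ` T)" if "\<sigma> \<in> G" for \<sigma>
    using f closed[OF that] by (intro poly_act_mem_ideal_gen_xmono) blast
  then show "ideal_gen ((\<lambda>\<sigma>. poly_act \<sigma> f) ` G) \<subseteq> ideal_gen (xmono ` T)"
    unfolding ideal_gen_eq_span by (intro ring_module.span_minimal) auto
next
  let ?fs = "\<lambda>i. poly_act (\<sigma>s i) f"
  have keys: "Poly_Mapping.keys (?fs i) \<subseteq> T" if "i < N" for i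
  proof -
    have "mon_act (\<sigma>s i) ` Poly_Mapping.keys f \<subseteq> T"
      using f closed[OF \<sigma>s[OF that]] by blast
    with keys_poly_act[OF perm[OF \<sigma>s[OF that]]] show ?thesis
      by (rule order.trans)
  qed
  have "mat N N (\<lambda>(i, j). Poly_Mapping.lookup (?fs i) (e j)) =
      mat N N (\<lambda>(i, j). Poly_Mapping.lookup f (mon_act (inv (\<sigma>s i)) (e j)))"
    by (rule cong_mat) (simp_all add: lookup_poly_act[OF perm[OF \<sigma>s]])
  with det have "xmono ` T \<subseteq> ideal_gen (?fs ` {0..<N})"
    using xmono_mem_ideal_gen_if_det_nonzero[where fs = ?fs, OF e keys] by auto
  also have "\<dots> \<subseteq> ideal_gen ((\<lambda>\<sigma>. poly_act \<sigma> f) ` G)"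
    unfolding ideal_gen_eq_span using \<sigma>s by (intro ring_module.span_mono) auto
  finally show "ideal_gen (xmono ` T) \<subseteq> ideal_gen ((\<lambda>\<sigma>. poly_act \<sigma> f) ` G)"
    unfolding ideal_gen_eq_span by (intro ring_module.span_minimal) simp_all
qed

text \<open>With \<open>\<sigma>\<^sub>i \<in> G\<close> mapping \<open>\<alpha>\<^sub>0\<close> to the \<open>i\<close>-th element of \<open>T\<close>, \<open>P\<close> is the determinant of
  the coefficient matrix of the \<open>\<sigma>\<^sub>i.f\<close> on \<open>T\<close>, which is the identity at \<open>f = x\<^sup>\<alpha>\<^sup>\<^sub>0\<close>.\<close>
lemma generic_orbit_ideal_eq_ideal_gen_xmono:
  assumes perm: "\<And>\<sigma>. \<sigma> \<in> G \<Longrightarrow> \<sigma> permutes {..<n}"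
    and closed: "\<And>\<sigma> \<beta>. \<sigma> \<in> G \<Longrightarrow> \<beta> \<in> T \<Longrightarrow> mon_act \<sigma> \<beta> \<in> T"
    and transitive: "\<forall>\<beta>\<in>T. \<forall>\<gamma>\<in>T. \<exists>\<sigma>\<in>G. mon_act \<sigma> \<beta> = \<gamma>"
    and "finite T" and \<alpha>\<^sub>0: "\<alpha>\<^sub>0 \<in> T"
  shows "\<exists>P :: ((nat \<Rightarrow>\<^sub>0 nat) \<Rightarrow>\<^sub>0 nat) \<Rightarrow>\<^sub>0 'k::field.
           peval P (Poly_Mapping.lookup (xmono \<alpha>\<^sub>0 :: 'k mpoly)) \<noteq> 0 \<and>
           (\<forall>f :: 'k mpoly. Poly_Mapping.keys f \<subseteq> T \<and> peval P (Poly_Mapping.lookup f) \<noteq> 0 \<longrightarrow>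
              ideal_gen ((\<lambda>\<sigma>. poly_act \<sigma> f) ` G) = ideal_gen (xmono ` T))"
proof -
  define N where "N = card T"
  obtain e where e: "bij_betw e {0..<N} T"
    using ex_bij_betw_nat_finite[OF \<open>finite T\<close>] unfolding N_def by blast
  have "\<forall>i\<in>{0..<N}. \<exists>\<sigma>. \<sigma> \<in> G \<and> mon_act \<sigma> \<alpha>\<^sub>0 = e i"
    using transitive \<alpha>\<^sub>0 e by (fastforce simp: bij_betw_def)
  then have "\<exists>\<sigma>s. \<forall>i\<in>{0..<N}. \<sigma>s i \<in> G \<and> mon_act (\<sigma>s i) \<alpha>\<^sub>0 = e i"
    by (rule bchoice)
  then obtain \<sigma>s where "\<forall>i\<in>{0..<N}. \<sigma>s i \<in> G \<and> mon_act (\<sigma>s i) \<alpha>\<^sub>0 = e i"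
    by blast
  then have \<sigma>s: "\<sigma>s i \<in> G" "mon_act (\<sigma>s i) \<alpha>\<^sub>0 = e i" if "i < N" for i
    using that by auto
  define x where "x i j = mon_act (inv (\<sigma>s i)) (e j)" for i j
  obtain P :: "((nat \<Rightarrow>\<^sub>0 nat) \<Rightarrow>\<^sub>0 nat) \<Rightarrow>\<^sub>0 'k"
    where P: "\<And>c. peval P c = det (mat N N (\<lambda>(i, j). c (x i j)))"
    using ex_peval_eq_det by blast
  have "mat N N (\<lambda>(i, j). Poly_Mapping.lookup (xmono \<alpha>\<^sub>0 :: 'k mpoly) (x i j)) = 1\<^sub>m N"
  proof (rule eq_matI)
    fix i j assume "i < dim_row (1\<^sub>m N :: 'k mat)" "j < dim_col (1\<^sub>m N :: 'k mat)"
    then have ij: "i < N" "j < N"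
      by simp_all
    have "\<alpha>\<^sub>0 = x i j \<longleftrightarrow> e i = e j"
      unfolding x_def using mon_act_inv_eq_iff[OF perm[OF \<sigma>s(1)[OF ij(1)]], of "e j" \<alpha>\<^sub>0] \<sigma>s(2)[OF ij(1)]
      by auto
    also have "\<dots> \<longleftrightarrow> i = j"
      using inj_onD[OF bij_betw_imp_inj_on[OF e]] ij by auto
    finally show "mat N N (\<lambda>(i, j). Poly_Mapping.lookup (xmono \<alpha>\<^sub>0 :: 'k mpoly) (x i j)) $$ (i, j) = 1\<^sub>m N $$ (i, j)"
      using ij by (simp add: xmono_def lookup_single when_def)
  qed simp_all
  then have "peval P (Poly_Mapping.lookup (xmono \<alpha>\<^sub>0 :: 'k mpoly)) \<noteq> 0"
    by (simp add: P)
  moreover have "ideal_gen ((\<lambda>\<sigma>. poly_act \<sigma> f) ` G) = ideal_gen (xmono ` T)"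
    if "Poly_Mapping.keys f \<subseteq> T" and "peval P (Poly_Mapping.lookup f) \<noteq> 0" for f :: "'k mpoly"
    using orbit_ideal_eq_ideal_gen_xmono_if_det_nonzero[OF perm closed e \<sigma>s(1)] that
    by (simp add: P x_def)
  ultimately show ?thesis
    by blast
qed

theorem theorem1p1:
  fixes n :: nat and A :: "(nat \<Rightarrow>\<^sub>0 nat) set" and G :: "(nat \<Rightarrow> nat) set"
  assumes inf: "infinite (UNIV :: 'k::field set)"
    and A_fin: "finite A" and A_ne: "A \<noteq> {}" and A_sub: "A \<subseteq> exps n"
    and A_type: "\<forall>\<alpha>\<in>A. \<forall>\<beta>\<in>A. \<beta> \<in> mtype n \<alpha>"
    and G: "perm_subgroup n G"
    and trans: "\<forall>\<alpha>\<in>A. \<forall>\<beta>\<in>mtype n \<alpha>. \<forall>\<gamma>\<in>mtype n \<alpha>. \<exists>\<sigma>\<in>G. mon_act \<sigma> \<beta> = \<gamma>"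
  shows "\<exists>P :: ((nat \<Rightarrow>\<^sub>0 nat) \<Rightarrow>\<^sub>0 nat) \<Rightarrow>\<^sub>0 'k.
           (\<exists>f :: 'k mpoly. Poly_Mapping.keys f \<subseteq> A \<and> peval P (Poly_Mapping.lookup f) \<noteq> 0) \<and>
           (\<forall>f :: 'k mpoly. Poly_Mapping.keys f \<subseteq> A \<and> peval P (Poly_Mapping.lookup f) \<noteq> 0 \<longrightarrow>
              is_monomial_ideal (ideal_gen ((\<lambda>\<sigma>. poly_act \<sigma> f) ` G)) \<and>
              (\<forall>\<alpha>\<in>Poly_Mapping.keys f. ideal_gen ((\<lambda>\<sigma>. poly_act \<sigma> f) ` G)
                              = ideal_gen ((\<lambda>\<sigma>. xmono (mon_act \<sigma> \<alpha>)) ` G)) \<and>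
              (\<forall>\<alpha>\<in>A. ideal_gen ((\<lambda>\<sigma>. poly_act \<sigma> f) ` G) = ideal_gen (xmono ` mtype n \<alpha>)))"
proof -
  obtain \<alpha>\<^sub>0 where \<alpha>\<^sub>0: "\<alpha>\<^sub>0 \<in> A"
    using A_ne by blast
  define T where "T = mtype n \<alpha>\<^sub>0"
  have perm: "\<And>\<sigma>. \<sigma> \<in> G \<Longrightarrow> \<sigma> permutes {..<n}"
    using G by (simp add: perm_subgroup_def)
  have A_T: "A \<subseteq> T" and mtype_A: "\<And>\<alpha>. \<alpha> \<in> A \<Longrightarrow> mtype n \<alpha> = T"
    using A_type \<alpha>\<^sub>0 mtype_trans unfolding T_def by blast+
  have closed: "\<And>\<sigma> \<beta>. \<sigma> \<in> G \<Longrightarrow> \<beta> \<in> T \<Longrightarrow> mon_act \<sigma> \<beta> \<in> T"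
    unfolding T_def using perm mon_act_mem_mtype by blast
  have transitive: "\<forall>\<beta>\<in>T. \<forall>\<gamma>\<in>T. \<exists>\<sigma>\<in>G. mon_act \<sigma> \<beta> = \<gamma>"
    using trans \<alpha>\<^sub>0 unfolding T_def by blast
  obtain P :: "((nat \<Rightarrow>\<^sub>0 nat) \<Rightarrow>\<^sub>0 nat) \<Rightarrow>\<^sub>0 'k" where P: "peval P (Poly_Mapping.lookup (xmono \<alpha>\<^sub>0 :: 'k mpoly)) \<noteq> 0"
    and orbit_ideal: "\<And>f :: 'k mpoly. Poly_Mapping.keys f \<subseteq> T \<Longrightarrow> peval P (Poly_Mapping.lookup f) \<noteq> 0 \<Longrightarrow>
                        ideal_gen ((\<lambda>\<sigma>. poly_act \<sigma> f) ` G) = ideal_gen (xmono ` T)"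
    using generic_orbit_ideal_eq_ideal_gen_xmono[OF perm closed transitive _ subsetD[OF A_T \<alpha>\<^sub>0]]
    unfolding T_def by (blast intro: finite_mtype)
  show ?thesis
  proof (intro exI[of _ P] conjI allI impI ballI)
    show "\<exists>f :: 'k mpoly. Poly_Mapping.keys f \<subseteq> A \<and> peval P (Poly_Mapping.lookup f) \<noteq> 0"
      using P \<alpha>\<^sub>0 by (intro exI[of _ "xmono \<alpha>\<^sub>0"]) (simp add: xmono_def)
  next
    fix f :: "'k mpoly"
    assume "Poly_Mapping.keys f \<subseteq> A \<and> peval P (Poly_Mapping.lookup f) \<noteq> 0"
    then have f_T: "Poly_Mapping.keys f \<subseteq> T" and ideal_eq: "ideal_gen ((\<lambda>\<sigma>. poly_act \<sigma> f) ` G) = ideal_gen (xmono ` T)"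
      using orbit_ideal A_T by blast+
    then show "is_monomial_ideal (ideal_gen ((\<lambda>\<sigma>. poly_act \<sigma> f) ` G))"
      unfolding is_monomial_ideal_def by blast
    show "ideal_gen ((\<lambda>\<sigma>. poly_act \<sigma> f) ` G) = ideal_gen ((\<lambda>\<sigma>. xmono (mon_act \<sigma> \<alpha>)) ` G)"
      if "\<alpha> \<in> Poly_Mapping.keys f" for \<alpha>
      using ideal_eq ideal_gen_xmono_orbit_eq[OF closed transitive] f_T that by blast
    show "ideal_gen ((\<lambda>\<sigma>. poly_act \<sigma> f) ` G) = ideal_gen (xmono ` mtype n \<alpha>)" if "\<alpha> \<in> A" for \<alpha>
      using ideal_eq mtype_A[OF that] by simp
  qed
qed

end
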